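(* Let $G$ be a connected graph on $n$ vertices with distance matrix $D$. (i) If $G$ is not distance exceptional and $\kappa=D^+(n\vec 1)$, where $D^+$ is the Moore–Penrose inverse of $D$, then $\iota(G)=\dfrac{n}{\vec 1^\top\kappa}\in\mathbb{R}\cup\{\infty\}$ (with $n/0=\infty$). (ii) Let $\lambda_1\le\dots\le\lambda_n$ be the eigenvalues of $D$ with an orthonormal set of corresponding eigenvectors $\vec u_1,\dots,\vec u_n$. Then $$\iota(G)^{-1}=\sum_{i=1}^n\frac{(\vec u_i^\top\vec 1)^2}{\lambda_i}\in\mathbb{R}\cup\{\infty\},$$ interpreted as an extended real expression with the conventions $1/\infty=0$, $1/0=\infty$, $0/0=0$.
   Context: For a connected graph $G$ on vertices $v_1,\dots,v_n$, its distance matrix is $D=(d(v_i,v_j))_{i,j=1}^n$, where $d$ is the shortest-path distance; $\vec 1$ denotes the all-ones vector. $G$ is distance exceptional if $D\vec x=\vec 1$ has no solution. A curvature potential is a vector $\vec x$ with $D\vec x=\vec 1$. Curvature index $\iota(G)\in\mathbb{R}\cup\{\infty\}$: if $G$ is distance exceptional or has a curvature potential $\vec x$ with $\vec 1^\top\vec x\neq0$, then $\iota(G)$ is the unique real number with $\{D\vec x:\vec 1^\top\vec x=1\}\cap\mathbb{R}\vec 1=\{\iota(G)\vec 1\}$ (this intersection is a single point); otherwise (curvature potentials exist and all have $\vec 1^\top\vec x=0$) $\iota(G)=\infty$. *)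

theory Defs
  imports "HOL-Analysis.Analysis"
begin

text \<open>Simple graphs: vertex set = the finite type 'n (so n = CARD('n)),
  edges given by a symmetric irreflexive relation E.\<close>

definition simple_graph :: "('n \<Rightarrow> 'n \<Rightarrow> bool) \<Rightarrow> bool" where
  "simple_graph E \<longleftrightarrow> (\<forall>u v. E u v \<longrightarrow> E v u) \<and> (\<forall>u. \<not> E u u)"

definition walk :: "('n \<Rightarrow> 'n \<Rightarrow> bool) \<Rightarrow> 'n list \<Rightarrow> bool" where
  "walk E xs \<longleftrightarrow> xs \<noteq> [] \<and> (\<forall>i. Suc i < length xs \<longrightarrow> E (xs ! i) (xs ! Suc i))"

definition graph_connected :: "('n \<Rightarrow> 'n \<Rightarrow> bool) \<Rightarrow> bool" where
  "graph_connected E \<longleftrightarrow> (\<forall>u v. \<exists>xs. walk E xs \<and> hd xs = u \<and> last xs = v)"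

definition gdist :: "('n \<Rightarrow> 'n \<Rightarrow> bool) \<Rightarrow> 'n \<Rightarrow> 'n \<Rightarrow> nat" where
  "gdist E u v = (LEAST k. \<exists>xs. walk E xs \<and> hd xs = u \<and> last xs = v \<and> length xs = Suc k)"

definition dist_matrix :: "('n::finite \<Rightarrow> 'n \<Rightarrow> bool) \<Rightarrow> real^'n^'n" where
  "dist_matrix E = (\<chi> i j. real (gdist E i j))"

definition ones :: "real^'n" where
  "ones = (\<chi> i. 1)"

definition distance_exceptional :: "('n::finite \<Rightarrow> 'n \<Rightarrow> bool) \<Rightarrow> bool" where
  "distance_exceptional E \<longleftrightarrow> \<not> (\<exists>x. dist_matrix E *v x = ones)"

definition curvature_index :: "('n::finite \<Rightarrow> 'n \<Rightarrow> bool) \<Rightarrow> ereal" where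
  "curvature_index E =
     (if distance_exceptional E \<or> (\<exists>x. dist_matrix E *v x = ones \<and> ones \<bullet> x \<noteq> 0)
      then ereal (THE t. {dist_matrix E *v x | x. ones \<bullet> x = 1} \<inter> {c *\<^sub>R ones | c. True}
                          = {t *\<^sub>R ones})
      else PInfty)"

definition moore_penrose :: "real^'n^'m \<Rightarrow> real^'m^'n" where
  "moore_penrose A = (THE X. A ** X ** A = A \<and> X ** A ** X = X \<and>
       transpose (A ** X) = A ** X \<and> transpose (X ** A) = X ** A)"

definition ediv :: "real \<Rightarrow> real \<Rightarrow> ereal" where
  "ediv a b = (if b = 0 then (if a = 0 then 0 else PInfty) else ereal (a / b))"

definition einverse :: "ereal \<Rightarrow> ereal" where
  "einverse x = (if x = PInfty then 0 else if x = 0 then PInfty else ereal (1 / real_of_ereal x))"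

end

theory Submission
  imports Defs
begin

(* The distance matrix D is symmetric, so ker D is orthogonal to the range of D. If D has a
   curvature potential x, every y with D y = c 1 differs from c x by a kernel vector, hence
   1.y = c (1.x): this determines iota as 1/(1.x).  Otherwise 1 is not orthogonal to ker D,
   which gives z in ker D with 1.z = 1 and iota = 0.  Since D M D = D for the Moore-Penrose
   inverse M, M 1 is a potential whenever one exists, which gives (i).  For (ii), expand in
   the orthonormal eigenbasis: u_i.1 = lambda_i (u_i.x), so the sum is Parseval's formula for
   1.x = 1/iota, while a kernel vector z with 1.z <> 0 forces a term with lambda_i = 0 and
   u_i.1 <> 0, i.e. an infinite term. *)

lemma inner_matrix_vector_transpose:
  fixes A :: "real^'n^'m"
  shows "(A *v x) \<bullet> y = x \<bullet> (transpose A *v y)"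
  by (metis dot_lmul_matrix inner_commute transpose_matrix_vector)

lemma symmetric_matrixI:
  fixes A :: "real^'n^'n"
  assumes "\<And>x y. (A *v x) \<bullet> y = x \<bullet> (A *v y)"
  shows "transpose A = A"
proof -
  have "transpose A *v x = A *v x" for x
    using assms inner_matrix_vector_transpose by (metis vector_eq_rdot inner_commute)
  then show ?thesis by (simp add: matrix_eq)
qed

lemma orthogonal_range_imp_transpose_kernel:
  fixes A :: "real^'n^'m"
  assumes "\<And>v. z \<bullet> (A *v v) = 0"
  shows "transpose A *v z = 0"
proof -
  have "(transpose A *v z) \<bullet> (transpose A *v z) = z \<bullet> (A *v (transpose A *v z))"
    by (metis inner_matrix_vector_transpose inner_commute transpose_transpose)
  then show ?thesis using assms by simp
qed

lemma orthogonal_projection_exists: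
  fixes S :: "'a::euclidean_space set"
  assumes "subspace S"
  obtains P where "linear P" "\<And>x. P x \<in> S" "\<And>x. x \<in> S \<Longrightarrow> P x = x"
    "\<And>x y. P x \<bullet> y = x \<bullet> P y"
proof -
  obtain B where "B \<subseteq> S" and orth: "pairwise orthogonal B" and unit: "\<And>x. x \<in> B \<Longrightarrow> norm x = 1"
    and "independent B" and span_B: "span B = S"
    using orthonormal_basis_subspace[OF assms] by metis
  then have "finite B" using independent_imp_finite by blast
  define P where "P x = (\<Sum>b\<in>B. (x \<bullet> b) *\<^sub>R b)" for x
  show ?thesis
  proof
    show "linear P"
      unfolding P_def
      by (intro linearI) (simp_all add: inner_add_left scaleR_add_left sum.distrib scaleR_sum_right)
    show "P x \<in> S" for x
      unfolding P_def span_B[symmetric] by (intro span_sum span_mul span_base)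
    show "P x = x" if "x \<in> S" for x
      unfolding P_def using orthonormal_basis_expand[OF orth unit _ \<open>finite B\<close>] that span_B by blast
    show "P x \<bullet> y = x \<bullet> P y" for x y
      unfolding P_def by (simp add: inner_sum_left inner_sum_right inner_commute mult.commute)
  qed
qed

lemma not_solvable_imp_transpose_kernel:
  fixes A :: "real^'n^'m"
  assumes "\<nexists>x. A *v x = b"
  obtains z where "transpose A *v z = 0" and "b \<bullet> z = 1"
proof -
  let ?R = "range ((*v) A)"
  have "subspace ?R"
    by (simp only: linear_subspace_image matrix_vector_mul_linear subspace_UNIV)
  obtain P where "linear P"
    and P: "\<And>w. P w \<in> ?R" "\<And>w. w \<in> ?R \<Longrightarrow> P w = w" "\<And>v w. P v \<bullet> w = v \<bullet> P w"
    using orthogonal_projection_exists[OF \<open>subspace ?R\<close>] by blast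
  define z where "z = b - P b"
  have z_orth: "z \<bullet> (A *v v) = 0" for v
    using P(2,3) by (simp add: z_def inner_diff_left)
  have "P b \<bullet> z = 0"
    using P(1)[of b] z_orth by (auto simp: inner_commute)
  then have "b \<bullet> z = z \<bullet> z"
    by (simp add: z_def inner_diff_left inner_commute)
  moreover have "z \<noteq> 0"
    using P(1)[of b] assms by (auto simp: z_def)
  ultimately have "b \<bullet> z \<noteq> 0" by simp
  show thesis
  proof (rule that)
    show "transpose A *v ((1 / (b \<bullet> z)) *\<^sub>R z) = 0"
      using orthogonal_range_imp_transpose_kernel[OF z_orth] by (simp add: matrix_vector_mult_scaleR)
    show "b \<bullet> ((1 / (b \<bullet> z)) *\<^sub>R z) = 1"
      using \<open>b \<bullet> z \<noteq> 0\<close> by simp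
  qed
qed

definition penrose_conditions :: "real^'n^'m \<Rightarrow> real^'m^'n \<Rightarrow> bool" where
  "penrose_conditions A X \<longleftrightarrow> A ** X ** A = A \<and> X ** A ** X = X \<and>
     transpose (A ** X) = A ** X \<and> transpose (X ** A) = X ** A"

lemma penrose_conditions_unique:
  assumes "penrose_conditions A X" and "penrose_conditions A Y"
  shows "X = Y"
proof -
  have X1: "A ** X ** A = A" and X2: "X ** A ** X = X"
    and X3: "transpose (A ** X) = A ** X" and X4: "transpose (X ** A) = X ** A"
    and Y1: "A ** Y ** A = A" and Y2: "Y ** A ** Y = Y"
    and Y3: "transpose (A ** Y) = A ** Y" and Y4: "transpose (Y ** A) = Y ** A"
    using assms unfolding penrose_conditions_def by (blast+)
  have "X = X ** transpose (A ** X)" using X2 X3 by (simp add: matrix_mul_assoc)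
  also have "\<dots> = X ** transpose X ** transpose (A ** Y ** A)"
    using Y1 by (simp add: matrix_transpose_mul matrix_mul_assoc)
  also have "\<dots> = X ** transpose (A ** X) ** transpose (A ** Y)"
    by (simp add: matrix_transpose_mul matrix_mul_assoc)
  also have "\<dots> = X ** A ** Y" using X2 X3 Y3 by (simp add: matrix_mul_assoc)
  finally have XAY: "X = X ** A ** Y" .
  have "Y = transpose (Y ** A) ** Y" using Y2 Y4 by simp
  also have "\<dots> = transpose (A ** X ** A) ** transpose Y ** Y"
    using X1 by (simp add: matrix_transpose_mul matrix_mul_assoc)
  also have "\<dots> = transpose (X ** A) ** transpose (Y ** A) ** Y"
    by (simp add: matrix_transpose_mul matrix_mul_assoc)
  also have "\<dots> = X ** A ** (Y ** A ** Y)" using X4 Y4 by (simp add: matrix_mul_assoc)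
  also have "\<dots> = X ** A ** Y" using Y2 by simp
  finally show ?thesis using XAY by simp
qed

lemma penrose_conditions_exist:
  fixes A :: "real^'n^'m"
  shows "\<exists>X. penrose_conditions A X"
proof -
  let ?R = "range ((*v) A)" and ?S = "range ((*v) (transpose A))"
  have "subspace ?R" "subspace ?S"
    by (simp_all only: linear_subspace_image matrix_vector_mul_linear subspace_UNIV)
  obtain P where
    P: "linear P" "\<And>w. P w \<in> ?R" "\<And>w. w \<in> ?R \<Longrightarrow> P w = w" "\<And>v w. P v \<bullet> w = v \<bullet> P w"
    using orthogonal_projection_exists[OF \<open>subspace ?R\<close>] by blast
  obtain Q where
    Q: "linear Q" "\<And>v. Q v \<in> ?S" "\<And>v. v \<in> ?S \<Longrightarrow> Q v = v" "\<And>v w. Q v \<bullet> w = v \<bullet> Q w"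
    using orthogonal_projection_exists[OF \<open>subspace ?S\<close>] by blast
  have AQ: "A *v Q v = A *v v" for v
  proof -
    have "(v - Q v) \<bullet> (transpose A *v w) = 0" for w
      using Q(3,4) by (simp add: inner_diff_left)
    then have "transpose (transpose A) *v (v - Q v) = 0"
      by (rule orthogonal_range_imp_transpose_kernel)
    then show ?thesis by (simp add: matrix_vector_mult_diff_distrib)
  qed
  have "span ?S = ?S"
    using \<open>subspace ?S\<close> by (rule span_eq_iff[THEN iffD2])
  have "s = 0" if "s \<in> ?S" and As: "A *v s = 0" for s
  proof -
    obtain w where "s = transpose A *v w" using \<open>s \<in> ?S\<close> by blast
    then have "s \<bullet> s = w \<bullet> (A *v s)"
      using inner_matrix_vector_transpose[of "transpose A" w s] by simp
    then show ?thesis using As by simp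
  qed
  then have "inj_on ((*v) A) (span ?S)"
    unfolding \<open>span ?S = ?S\<close>
    by (subst linear_inj_on_iff_eq_0[OF matrix_vector_mul_linear \<open>subspace ?S\<close>]) blast
  from linear_inj_on_left_inverse[OF matrix_vector_mul_linear this]
  obtain g where g: "linear g" "\<forall>s\<in>?S. g (A *v s) = s"
    unfolding \<open>span ?S = ?S\<close> by blast
  have gA: "g (A *v v) = Q v" for v
    by (metis AQ Q(2) g(2))
  have AgP: "A *v g (P w) = P w" for w
  proof -
    obtain v where "P w = A *v v" using P(2) by blast
    then show ?thesis by (simp add: gA AQ)
  qed
  have PA: "P (A *v v) = A *v v" for v
    by (rule P(3)) blast
  \<comment> \<open>P, Q project orthogonally onto the column and row spaces of A; g inverts A on the row space.\<close>
  define X where "X = matrix (g \<circ> P)"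
  have X: "X *v w = g (P w)" for w
    unfolding X_def using linear_compose[OF P(1) g(1)] matrix_vector_mul(2) by (metis comp_apply)
  have AX: "(A ** X) *v w = P w" and XA: "(X ** A) *v v = Q v" for v w
    by (simp_all add: matrix_vector_mul_assoc[symmetric] X AgP PA gA)
  have "A ** X ** A = A"
    by (simp add: matrix_eq matrix_vector_mul_assoc[symmetric] X PA gA AQ)
  moreover have "X ** A ** X = X"
    by (simp add: matrix_eq matrix_vector_mul_assoc[symmetric] X AgP P(2,3))
  moreover have "transpose (A ** X) = A ** X" "transpose (X ** A) = X ** A"
    by (simp_all add: symmetric_matrixI AX XA P(4) Q(4))
  ultimately show ?thesis
    unfolding penrose_conditions_def by blast
qed

lemma moore_penrose_conditions: "penrose_conditions A (moore_penrose A)"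
proof -
  have "\<exists>!X. penrose_conditions A X"
    using penrose_conditions_exist penrose_conditions_unique by blast
  then show ?thesis
    unfolding moore_penrose_def penrose_conditions_def[symmetric] by (rule theI')
qed

lemma moore_penrose_solves:
  fixes A :: "real^'n^'m"
  assumes "\<exists>x. A *v x = b"
  shows "A *v (moore_penrose A *v b) = b"
  using assms moore_penrose_conditions[of A]
  by (metis penrose_conditions_def matrix_vector_mul_assoc)

lemma orthonormal_family_inner_expansion:
  fixes u :: "'i \<Rightarrow> 'a::euclidean_space"
  assumes card: "card I = DIM('a)"
    and orthonormal: "\<forall>i\<in>I. \<forall>j\<in>I. u i \<bullet> u j = (if i = j then 1 else 0)"
  shows "a \<bullet> v = (\<Sum>i\<in>I. (a \<bullet> u i) * (v \<bullet> u i))"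
proof -
  have "finite I"
    using card by (metis DIM_positive card.infinite less_irrefl)
  have inj: "inj_on u I"
    using orthonormal by (intro inj_onI) (metis zero_neq_one)
  have orth: "pairwise orthogonal (u ` I)"
    using orthonormal by (auto simp: pairwise_def orthogonal_def)
  have unit: "norm b = 1" if "b \<in> u ` I" for b
    using that orthonormal by (auto simp: norm_eq_sqrt_inner)
  then have "independent (u ` I)"
    using pairwise_orthogonal_independent[OF orth] by fastforce
  moreover have "card (u ` I) = DIM('a)"
    using card card_image[OF inj] by simp
  ultimately have "v \<in> span (u ` I)"
    using card_ge_dim_independent[of "u ` I" UNIV] by auto
  then have "v = (\<Sum>b\<in>u ` I. (v \<bullet> b) *\<^sub>R b)"
    using orthonormal_basis_expand[OF orth unit] \<open>finite I\<close> by simp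
  also have "\<dots> = (\<Sum>i\<in>I. (v \<bullet> u i) *\<^sub>R u i)"
    using sum.reindex[OF inj] by simp
  finally show ?thesis
    by (metis (no_types, lifting) inner_scaleR_right inner_sum_right mult.commute sum.cong)
qed

lemma symmetric_eigenvector_inner:
  fixes A :: "real^'n^'n"
  assumes "transpose A = A" and "A *v u = lam *\<^sub>R u"
  shows "u \<bullet> (A *v w) = lam * (u \<bullet> w)"
  using inner_matrix_vector_transpose[of A u w] assms by simp

lemma spectral_sum_of_solution:
  fixes A :: "real^'n^'n" and u :: "'i \<Rightarrow> real^'n"
  assumes sym: "transpose A = A" and card: "card I = CARD('n)"
    and orthonormal: "\<forall>i\<in>I. \<forall>j\<in>I. u i \<bullet> u j = (if i = j then 1 else 0)"
    and eigen: "\<forall>i\<in>I. A *v u i = lam i *\<^sub>R u i"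
    and solution: "A *v x = b"
  shows "(\<Sum>i\<in>I. ediv ((u i \<bullet> b)\<^sup>2) (lam i)) = ereal (b \<bullet> x)"
proof -
  have "ediv ((u i \<bullet> b)\<^sup>2) (lam i) = ereal ((b \<bullet> u i) * (x \<bullet> u i))" if "i \<in> I" for i
  proof -
    have "u i \<bullet> b = lam i * (u i \<bullet> x)"
      using symmetric_eigenvector_inner[OF sym] eigen that solution by blast
    then show ?thesis
      by (simp add: ediv_def power2_eq_square inner_commute zero_ereal_def)
  qed
  then have "(\<Sum>i\<in>I. ediv ((u i \<bullet> b)\<^sup>2) (lam i)) = (\<Sum>i\<in>I. ereal ((b \<bullet> u i) * (x \<bullet> u i)))"
    by (rule sum.cong[OF refl])
  also have "\<dots> = ereal (b \<bullet> x)"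
    using orthonormal_family_inner_expansion[of I u b x] card orthonormal by simp
  finally show ?thesis .
qed

lemma spectral_sum_of_kernel_vector:
  fixes A :: "real^'n^'n" and u :: "'i \<Rightarrow> real^'n"
  assumes sym: "transpose A = A" and card: "card I = CARD('n)"
    and orthonormal: "\<forall>i\<in>I. \<forall>j\<in>I. u i \<bullet> u j = (if i = j then 1 else 0)"
    and eigen: "\<forall>i\<in>I. A *v u i = lam i *\<^sub>R u i"
    and kernel: "A *v z = 0" and "b \<bullet> z \<noteq> 0"
  shows "(\<Sum>i\<in>I. ediv ((u i \<bullet> b)\<^sup>2) (lam i)) = PInfty"
proof -
  have "(\<Sum>i\<in>I. (b \<bullet> u i) * (z \<bullet> u i)) \<noteq> 0"
    using orthonormal_family_inner_expansion[of I u b z] card orthonormal \<open>b \<bullet> z \<noteq> 0\<close> by simp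
  then obtain i where i: "i \<in> I" "(b \<bullet> u i) * (z \<bullet> u i) \<noteq> 0"
    by (meson sum.neutral)
  have "lam i * (u i \<bullet> z) = 0"
    using symmetric_eigenvector_inner[OF sym, of "u i" "lam i" z] eigen i(1) kernel by simp
  then have "ediv ((u i \<bullet> b)\<^sup>2) (lam i) = PInfty"
    using i(2) by (simp add: ediv_def inner_commute)
  moreover have "finite I"
    using card by (metis card.infinite zero_less_card_finite less_irrefl)
  ultimately show ?thesis
    using i(1) by (auto simp: sum_Pinfty)
qed

lemma walk_rev:
  assumes "simple_graph E" and "walk E xs"
  shows "walk E (rev xs)"
  unfolding walk_def
proof (intro conjI allI impI)
  show "rev xs \<noteq> []" using \<open>walk E xs\<close> by (simp add: walk_def)
  fix i assume i: "Suc i < length (rev xs)"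
  define j where "j = length xs - Suc (Suc i)"
  have "E (xs ! j) (xs ! Suc j)"
    using \<open>walk E xs\<close> i by (simp add: walk_def j_def)
  moreover have "rev xs ! i = xs ! Suc j" "rev xs ! Suc i = xs ! j"
    using i by (simp_all add: rev_nth j_def Suc_diff_Suc)
  ultimately show "E (rev xs ! i) (rev xs ! Suc i)"
    using \<open>simple_graph E\<close> by (simp add: simple_graph_def)
qed

lemma gdist_sym:
  assumes "simple_graph E"
  shows "gdist E u v = gdist E v u"
proof -
  have "\<exists>xs. walk E xs \<and> hd xs = v \<and> last xs = u \<and> length xs = k"
    if "walk E xs" "hd xs = u" "last xs = v" "length xs = k" for u v k xs
  proof (intro exI conjI)
    have "xs \<noteq> []" using \<open>walk E xs\<close> by (simp add: walk_def)
    then show "hd (rev xs) = v" "last (rev xs) = u"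
      using that by (simp_all add: hd_rev last_rev)
  qed (use that walk_rev[OF assms] in auto)
  then have "(\<exists>xs. walk E xs \<and> hd xs = u \<and> last xs = v \<and> length xs = k) \<longleftrightarrow>
      (\<exists>xs. walk E xs \<and> hd xs = v \<and> last xs = u \<and> length xs = k)" for k
    by blast
  then show ?thesis
    unfolding gdist_def by simp
qed

lemma dist_matrix_symmetric:
  assumes "simple_graph E"
  shows "transpose (dist_matrix E) = dist_matrix E"
  using gdist_sym[OF assms] by (simp add: transpose_def dist_matrix_def vec_eq_iff)

lemma ones_neq_zero: "(ones :: real^'n) \<noteq> 0"
  by (simp add: ones_def vec_eq_iff)

lemma the_scaleR_singleton:
  fixes v :: "'a::real_vector"
  assumes "v \<noteq> 0"
  shows "(THE t. {c *\<^sub>R v} = {t *\<^sub>R v}) = c"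
  using assms by (intro the_equality) auto

lemma curvature_index_eqI:
  fixes E :: "'n::finite \<Rightarrow> 'n \<Rightarrow> bool"
  assumes "distance_exceptional E \<or> (\<exists>x. dist_matrix E *v x = ones \<and> ones \<bullet> x \<noteq> 0)"
    and "\<And>c. (\<exists>y. dist_matrix E *v y = c *\<^sub>R ones \<and> ones \<bullet> y = 1) \<longleftrightarrow> c = t"
  shows "curvature_index E = ereal t"
proof -
  have "{dist_matrix E *v y | y. ones \<bullet> y = 1} \<inter> {c *\<^sub>R ones | c. True} = {t *\<^sub>R ones}"
  proof (intro equalityI subsetI)
    fix w assume "w \<in> {dist_matrix E *v y | y. ones \<bullet> y = 1} \<inter> {c *\<^sub>R ones | c. True}"
    then obtain y c where "ones \<bullet> y = 1" "w = dist_matrix E *v y" and c: "w = c *\<^sub>R ones"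
      by blast
    then have "c = t" using assms(2) by metis
    then show "w \<in> {t *\<^sub>R ones}" using c by simp
  next
    fix w assume "w \<in> {t *\<^sub>R (ones :: real^'n)}"
    moreover obtain y where "dist_matrix E *v y = t *\<^sub>R ones" "ones \<bullet> y = 1"
      using assms(2) by blast
    ultimately show "w \<in> {dist_matrix E *v y | y. ones \<bullet> y = 1} \<inter> {c *\<^sub>R ones | c. True}"
      by (metis (mono_tags, lifting) IntI mem_Collect_eq singletonD)
  qed
  then show ?thesis
    using assms(1) by (simp add: curvature_index_def the_scaleR_singleton ones_neq_zero)
qed

lemma curvature_index_potential:
  fixes E :: "'n::finite \<Rightarrow> 'n \<Rightarrow> bool"
  assumes sym: "transpose (dist_matrix E) = dist_matrix E"
    and pot: "dist_matrix E *v x = ones"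
  shows "curvature_index E = (if ones \<bullet> x = 0 then PInfty else ereal (1 / (ones \<bullet> x)))"
proof -
  let ?D = "dist_matrix E" and ?s = "ones \<bullet> x"
  have sum_pot: "ones \<bullet> y = c * ?s" if "?D *v y = c *\<^sub>R ones" for y c
  proof -
    have "?D *v (y - c *\<^sub>R x) = 0"
      using that pot by (simp add: matrix_vector_mult_diff_distrib matrix_vector_mult_scaleR)
    then have "ones \<bullet> (y - c *\<^sub>R x) = 0"
      using inner_matrix_vector_transpose[of ?D x] pot sym by simp
    then show ?thesis by (simp add: inner_diff_right)
  qed
  show ?thesis
  proof (cases "?s = 0")
    case True
    have "\<not> distance_exceptional E"
      using pot by (auto simp: distance_exceptional_def)
    moreover have "\<nexists>y. ?D *v y = ones \<and> ones \<bullet> y \<noteq> 0"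
      using sum_pot[of _ 1] True by force
    ultimately show ?thesis
      using True by (simp add: curvature_index_def)
  next
    case False
    have "(\<exists>y. ?D *v y = c *\<^sub>R ones \<and> ones \<bullet> y = 1) \<longleftrightarrow> c = 1 / ?s" for c
    proof
      assume "\<exists>y. ?D *v y = c *\<^sub>R ones \<and> ones \<bullet> y = 1"
      then have "1 = c * ?s" using sum_pot by force
      then show "c = 1 / ?s" using False by (simp add: field_simps)
    next
      assume "c = 1 / ?s"
      then show "\<exists>y. ?D *v y = c *\<^sub>R ones \<and> ones \<bullet> y = 1"
        using pot False by (intro exI[of _ "c *\<^sub>R x"]) (simp add: matrix_vector_mult_scaleR)
    qed
    then have "curvature_index E = ereal (1 / ?s)"
      by (rule curvature_index_eqI[rotated]) (use pot False in blast)
    then show ?thesis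
      using False by simp
  qed
qed

lemma curvature_index_exceptional:
  fixes E :: "'n::finite \<Rightarrow> 'n \<Rightarrow> bool"
  assumes sym: "transpose (dist_matrix E) = dist_matrix E"
    and exc: "distance_exceptional E"
  shows "curvature_index E = 0"
proof -
  let ?D = "dist_matrix E"
  obtain z where "?D *v z = 0" "ones \<bullet> z = 1"
    using not_solvable_imp_transpose_kernel[of ?D ones] exc sym
    by (auto simp: distance_exceptional_def)
  have "(\<exists>y. ?D *v y = c *\<^sub>R ones \<and> ones \<bullet> y = 1) \<longleftrightarrow> c = 0" for c
  proof
    assume "\<exists>y. ?D *v y = c *\<^sub>R ones \<and> ones \<bullet> y = 1"
    then obtain y where "?D *v y = c *\<^sub>R ones" by blast
    then have "c \<noteq> 0 \<Longrightarrow> ?D *v ((1 / c) *\<^sub>R y) = ones"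
      by (simp add: matrix_vector_mult_scaleR)
    then show "c = 0" using exc by (auto simp: distance_exceptional_def)
  next
    assume "c = 0"
    then show "\<exists>y. ?D *v y = c *\<^sub>R ones \<and> ones \<bullet> y = 1"
      using \<open>?D *v z = 0\<close> \<open>ones \<bullet> z = 1\<close> by auto
  qed
  then show ?thesis
    using curvature_index_eqI[of E 0] exc by (simp add: zero_ereal_def)
qed

lemma einverse_curvature_index_spectral_sum:
  fixes E :: "'n::finite \<Rightarrow> 'n \<Rightarrow> bool" and u :: "'i \<Rightarrow> real^'n"
  assumes sym: "transpose (dist_matrix E) = dist_matrix E" and card: "card I = CARD('n)"
    and orthonormal: "\<forall>i\<in>I. \<forall>j\<in>I. u i \<bullet> u j = (if i = j then 1 else 0)"
    and eigen: "\<forall>i\<in>I. dist_matrix E *v u i = lam i *\<^sub>R u i"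
  shows "einverse (curvature_index E) = (\<Sum>i\<in>I. ediv ((u i \<bullet> ones)\<^sup>2) (lam i))"
proof (cases "distance_exceptional E")
  case True
  then obtain z where "dist_matrix E *v z = 0" and "ones \<bullet> z = 1"
    using not_solvable_imp_transpose_kernel[of "dist_matrix E" ones] sym
    by (auto simp: distance_exceptional_def)
  then show ?thesis
    using curvature_index_exceptional[OF sym True]
      spectral_sum_of_kernel_vector[OF sym card orthonormal eigen]
    by (simp add: einverse_def)
next
  case False
  then obtain x where potential: "dist_matrix E *v x = ones"
    by (auto simp: distance_exceptional_def)
  show ?thesis
    using curvature_index_potential[OF sym potential]
      spectral_sum_of_solution[OF sym card orthonormal eigen potential]
    by (simp add: einverse_def zero_ereal_def)
qed

theorem proposition3p3:
  fixes E :: "'n::finite \<Rightarrow> 'n \<Rightarrow> bool"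
    and lam :: "nat \<Rightarrow> real" and u :: "nat \<Rightarrow> real^'n"
  assumes "simple_graph E" and "graph_connected E"
  shows "(\<not> distance_exceptional E \<longrightarrow>
           curvature_index E =
             ediv (real CARD('n))
                  (ones \<bullet> (moore_penrose (dist_matrix E) *v (real CARD('n) *\<^sub>R ones)))) \<and>
         ((\<forall>i j. 1 \<le> i \<and> i \<le> j \<and> j \<le> CARD('n) \<longrightarrow> lam i \<le> lam j) \<and>
         (\<forall>i\<in>{1..CARD('n)}. dist_matrix E *v u i = lam i *\<^sub>R u i) \<and>
         (\<forall>i\<in>{1..CARD('n)}. \<forall>j\<in>{1..CARD('n)}. u i \<bullet> u j = (if i = j then 1 else 0))
         \<longrightarrow> einverse (curvature_index E) =
               (\<Sum>i\<in>{1..CARD('n)}. ediv ((u i \<bullet> ones)\<^sup>2) (lam i)))"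
proof (intro conjI impI)
  let ?D = "dist_matrix E" and ?n = "real CARD('n)"
  have sym: "transpose ?D = ?D"
    using \<open>simple_graph E\<close> by (rule dist_matrix_symmetric)
  show "curvature_index E = ediv ?n (ones \<bullet> (moore_penrose ?D *v (?n *\<^sub>R ones)))"
    if "\<not> distance_exceptional E"
  proof -
    have "?D *v (moore_penrose ?D *v ones) = ones"
      using that by (intro moore_penrose_solves) (auto simp: distance_exceptional_def)
    then show ?thesis
      using curvature_index_potential[OF sym] by (simp add: ediv_def matrix_vector_mult_scaleR)
  qed
  show "einverse (curvature_index E) = (\<Sum>i\<in>{1..CARD('n)}. ediv ((u i \<bullet> ones)\<^sup>2) (lam i))"
    if "(\<forall>i j. 1 \<le> i \<and> i \<le> j \<and> j \<le> CARD('n) \<longrightarrow> lam i \<le> lam j) \<and>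
      (\<forall>i\<in>{1..CARD('n)}. ?D *v u i = lam i *\<^sub>R u i) \<and>
      (\<forall>i\<in>{1..CARD('n)}. \<forall>j\<in>{1..CARD('n)}. u i \<bullet> u j = (if i = j then 1 else 0))"
    using einverse_curvature_index_spectral_sum[OF sym, of "{1..CARD('n)}"] that by simp
qed

end
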